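(* Let $\kappa>0$ and let $S$ be a $\kappa$-cylindrical surface whose directrix $(x,z)$ is given by the solution of $x'=\cos\theta$, $z'=\sin\theta$, $\theta'=\kappa z$ with $x(0)=0$, $\theta(0)=0$, $z(0)=z_0>0$ (so $z_0$ is the lowest height of $S$ above $\Pi=\{z=0\}$). Then the height $z$ satisfies $$z_0\le z(p)\le\sqrt{\frac4\kappa+z_0^2}\qquad\text{for all }p\in S,$$ and both bounds are attained.
   Context: A $\kappa$-cylindrical surface ($\kappa\ne0$ constant) is a cylindrical ruled surface in $\mathbb R^3$ locally satisfying $\operatorname{div}\big(Du/\sqrt{1+|Du|^2}\big)=\kappa u$; it has horizontal rulings and is parametrized as $(x(s),t,z(s))$ with arc-length directrix $(x,z)$ and $\theta$ the angle between $\partial/\partial x$ and the directrix, satisfying the system above. *)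

theory Defs
  imports Complex_Main
begin

definition cyl_surface :: "(real \<Rightarrow> real) \<Rightarrow> (real \<Rightarrow> real) \<Rightarrow> (real \<times> real \<times> real) set" where
  "cyl_surface x z = {(x s, t, z s) | s t. True}"

definition height :: "real \<times> real \<times> real \<Rightarrow> real" where
  "height p = snd (snd p)"

end

theory Submission
  imports Defs
begin

text \<open>The quantity \<open>cos \<theta> + \<kappa> z\<^sup>2 / 2\<close> is a first integral of the system, so with \<open>\<theta>(0) = 0\<close>
  we get \<open>z\<^sup>2 = z\<^sub>0\<^sup>2 + 2 (1 - cos \<theta>) / \<kappa>\<close>, which lies between \<open>z\<^sub>0\<^sup>2\<close> and \<open>z\<^sub>0\<^sup>2 + 4 / \<kappa>\<close>.
  In particular \<open>z\<close> never vanishes, hence stays positive, which gives the two bounds.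
  The lower bound is attained at \<open>s = 0\<close>; for the upper one, \<open>\<theta>' = \<kappa> z \<ge> \<kappa> z\<^sub>0 > 0\<close> forces
  \<open>\<theta>\<close> to reach \<open>\<pi>\<close>, where \<open>cos \<theta> = -1\<close>.\<close>

lemma continuous_pos_if_no_zero:
  fixes f :: "real \<Rightarrow> real"
  assumes "continuous_on UNIV f" and "\<And>s. f s \<noteq> 0" and "f a > 0"
  shows "f b > 0"
proof (rule ccontr)
  assume "\<not> f b > 0"
  then have "f b \<le> 0" by simp
  have "\<exists>t. f t = 0"
  proof (cases "b \<le> a")
    case True
    then show ?thesis
      using IVT'[of f b 0 a] \<open>f b \<le> 0\<close> assms(1,3) continuous_on_subset by fastforce
  next
    case False
    then show ?thesis
      using IVT2'[of f b 0 a] \<open>f b \<le> 0\<close> assms(1,3) continuous_on_subset by fastforce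
  qed
  then show False using assms(2) by blast
qed

lemma surj_nonneg_if_deriv_ge_pos:
  fixes f f' :: "real \<Rightarrow> real"
  assumes deriv: "\<And>s. (f has_real_derivative f' s) (at s)"
    and bound: "\<And>s. f' s \<ge> c" and "c > 0" and "y \<ge> f 0"
  shows "\<exists>t \<ge> 0. f t = y"
proof -
  define T where "T = (y - f 0) / c + 1"
  have "T > 0" unfolding T_def using \<open>c > 0\<close> \<open>y \<ge> f 0\<close> by (simp add: add_nonneg_pos)
  then obtain \<xi> where "f T - f 0 = T * f' \<xi>"
    using MVT2[of 0 T f f'] deriv by auto
  moreover have "T * c \<le> T * f' \<xi>"
    using \<open>T > 0\<close> bound by (simp add: mult_left_mono)
  moreover have "T * c > y - f 0"
    unfolding T_def using \<open>c > 0\<close> by (simp add: field_simps)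
  ultimately have "y \<le> f T" by linarith
  moreover have "continuous_on {0..T} f"
    using deriv by (meson DERIV_continuous continuous_at_imp_continuous_on)
  ultimately obtain t where "0 \<le> t" "f t = y"
    using IVT'[of f 0 y T] \<open>y \<ge> f 0\<close> \<open>T > 0\<close> by auto
  then show ?thesis by blast
qed

locale kappa_directrix =
  fixes \<kappa> :: real and z \<theta> :: "real \<Rightarrow> real"
  assumes z_deriv: "\<And>s. (z has_real_derivative sin (\<theta> s)) (at s)"
    and theta_deriv: "\<And>s. (\<theta> has_real_derivative \<kappa> * z s) (at s)"
begin

lemma first_integral: "cos (\<theta> s) + \<kappa> / 2 * (z s)\<^sup>2 = cos (\<theta> 0) + \<kappa> / 2 * (z 0)\<^sup>2"
proof -
  have "((\<lambda>s. cos (\<theta> s) + \<kappa> / 2 * (z s)\<^sup>2) has_real_derivative 0) (at s)" for s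
  proof -
    have "((\<lambda>s. cos (\<theta> s) + \<kappa> / 2 * (z s)\<^sup>2) has_real_derivative
        - sin (\<theta> s) * (\<kappa> * z s) + \<kappa> / 2 * (2 * z s * sin (\<theta> s))) (at s)"
      by (rule derivative_eq_intros theta_deriv z_deriv refl | simp)+
    then show ?thesis by (simp add: algebra_simps)
  qed
  then have "\<forall>s. ((\<lambda>s. cos (\<theta> s) + \<kappa> / 2 * (z s)\<^sup>2) has_real_derivative 0) (at s)" ..
  from DERIV_isconst_all[OF this, of s 0] show ?thesis by simp
qed

lemma continuous_z: "continuous_on A z"
  using z_deriv by (meson DERIV_continuous continuous_at_imp_continuous_on)

end

locale positive_kappa_directrix = kappa_directrix +
  assumes kappa_pos: "\<kappa> > 0" and theta_0: "\<theta> 0 = 0" and z_0_pos: "z 0 > 0"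
begin

lemma z_sq_eq: "(z s)\<^sup>2 = (z 0)\<^sup>2 + 2 * (1 - cos (\<theta> s)) / \<kappa>"
  using first_integral[of s] kappa_pos theta_0 by (simp add: field_simps)

lemma z_sq_bounds: "(z 0)\<^sup>2 \<le> (z s)\<^sup>2" "(z s)\<^sup>2 \<le> (z 0)\<^sup>2 + 4 / \<kappa>"
proof -
  have "0 \<le> 1 - cos (\<theta> s)" "2 * (1 - cos (\<theta> s)) \<le> 4"
    using cos_le_one[of "\<theta> s"] cos_ge_minus_one[of "\<theta> s"] by argo+
  then have "0 \<le> 2 * (1 - cos (\<theta> s)) / \<kappa>" "2 * (1 - cos (\<theta> s)) / \<kappa> \<le> 4 / \<kappa>"
    using kappa_pos by (simp_all add: divide_right_mono)
  then show "(z 0)\<^sup>2 \<le> (z s)\<^sup>2" "(z s)\<^sup>2 \<le> (z 0)\<^sup>2 + 4 / \<kappa>"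
    using z_sq_eq[of s] by linarith+
qed

lemma z_pos: "z s > 0"
proof (rule continuous_pos_if_no_zero[OF continuous_z _ z_0_pos])
  show "z t \<noteq> 0" for t
    using z_sq_bounds(1)[of t] z_0_pos by (metis power_zero_numeral zero_less_power2 not_le)
qed

lemma z_ge: "z 0 \<le> z s"
  using z_sq_bounds(1) z_pos by (meson power2_le_imp_le less_imp_le)

lemma z_le: "z s \<le> sqrt (4 / \<kappa> + (z 0)\<^sup>2)"
  using z_sq_bounds(2) z_pos by (metis add.commute real_le_rsqrt)

lemma z_attains_max: "\<exists>t. z t = sqrt (4 / \<kappa> + (z 0)\<^sup>2)"
proof -
  have "\<kappa> * z 0 \<le> \<kappa> * z s" for s
    using z_ge kappa_pos by simp
  then obtain t where "\<theta> t = pi"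
    using surj_nonneg_if_deriv_ge_pos[OF theta_deriv, of "\<kappa> * z 0" pi]
      kappa_pos z_0_pos theta_0 by auto
  then have "(z t)\<^sup>2 = 4 / \<kappa> + (z 0)\<^sup>2"
    using z_sq_eq[of t] by simp
  then have "z t = sqrt (4 / \<kappa> + (z 0)\<^sup>2)"
    using z_pos[of t] by (simp add: real_sqrt_unique)
  then show ?thesis ..
qed

end

theorem mainTheorem5:
  fixes \<kappa> z\<^sub>0 :: real and x z \<theta> :: "real \<Rightarrow> real"
  assumes "\<kappa> > 0" and "z\<^sub>0 > 0"
    and "\<And>s. (x has_real_derivative cos (\<theta> s)) (at s)"
    and "\<And>s. (z has_real_derivative sin (\<theta> s)) (at s)"
    and "\<And>s. (\<theta> has_real_derivative \<kappa> * z s) (at s)"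
    and "x 0 = 0" and "\<theta> 0 = 0" and "z 0 = z\<^sub>0"
  shows "(\<forall>p \<in> cyl_surface x z. z\<^sub>0 \<le> height p \<and> height p \<le> sqrt (4 / \<kappa> + z\<^sub>0 ^ 2))
    \<and> (\<exists>p \<in> cyl_surface x z. height p = z\<^sub>0)
    \<and> (\<exists>p \<in> cyl_surface x z. height p = sqrt (4 / \<kappa> + z\<^sub>0 ^ 2))"
proof -
  interpret positive_kappa_directrix \<kappa> z \<theta>
    using assms by unfold_locales auto
  have on_surface: "(x s, 0, z s) \<in> cyl_surface x z" for s
    unfolding cyl_surface_def by blast
  obtain t where "z t = sqrt (4 / \<kappa> + z\<^sub>0\<^sup>2)"
    using z_attains_max assms(8) by blast
  then show ?thesis
    using z_ge z_le on_surface[of 0] on_surface[of t] assms(8)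
    by (force simp: cyl_surface_def height_def)
qed

end
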